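(* Let $\beta_0\in(0,1)$, $l>0$, $r\in\mathbb{N}$, and let $k_1>-1$, $k_2<-1$, $z_1>-1$, $z_2<-1$ satisfy $$z_1<-\frac{2r-1}{2r},\qquad 2rz_1+k_1+2r<0.$$ Define $g(x)=|x|^{k_1}e^{-|x|}$ for $|x|\le1$, $g(x)=|x|^{k_2}e^{-|x|}$ for $|x|>1$, and $f(x)=|x|^{z_1}e^{-|x|}$ for $|x|\le1$, $f(x)=|x|^{z_2}e^{-|x|}$ for $|x|>1$. Then there is a constant $K=K(\beta_0,k_1,k_2,z_1,z_2,l,r)$ such that for all $\beta\in(\beta_0,1)$ and all $\eta\neq0$, $$\int_{|\eta|}^{|\eta|/\beta}\frac{(g\bullet f^{\bullet 2r})(\zeta)}{|\zeta|^l}\,d\zeta\le (1-\beta)\,K\,|\eta|^{n}e^{-|\eta|},$$ where $n=2rz_1+k_1+2r-l+1$ if $|\eta|\le1$ and $n=\max\{k_2,z_2\}+1-l$ if $|\eta|>1$.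
   Context: Convolution: $(f\bullet g)(y)=\int_{\mathbb{R}}f(x)g(y-x)\,dx$; $f^{\bullet 2r}$ denotes the $2r$-fold convolution $f\bullet\cdots\bullet f$. *)

theory Defs
  imports "HOL-Analysis.Analysis"
begin

definition conv :: "(real \<Rightarrow> real) \<Rightarrow> (real \<Rightarrow> real) \<Rightarrow> real \<Rightarrow> real" where
  "conv f g y = (LINT x|lborel. f x * g (y - x))"

text \<open>m-fold convolution power f conv ... conv f (m copies); only used for m \<ge> 1.\<close>
fun conv_pow :: "(real \<Rightarrow> real) \<Rightarrow> nat \<Rightarrow> real \<Rightarrow> real" where
  "conv_pow f 0 = (\<lambda>_. 0)"
| "conv_pow f (Suc 0) = f"
| "conv_pow f (Suc (Suc n)) = conv f (conv_pow f (Suc n))"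

definition pw :: "real \<Rightarrow> real \<Rightarrow> real \<Rightarrow> real" where
  "pw a b x = (if \<bar>x\<bar> \<le> 1 then \<bar>x\<bar> powr a else \<bar>x\<bar> powr b) * exp (- \<bar>x\<bar>)"

end

theory Submission
  imports Defs
begin

(* Write pw a b x = pw_powr a b |x| * exp (- |x|), where pw_powr a b t is t powr a for t <= 1
   and t powr b for t > 1.  Since exp (- |x|) * exp (- |y - x|) <= exp (- |y|), and the
   larger of |x| and |y - x| is at least half of the maximum of the smaller one and |y|, the
   convolution of two nonnegative functions dominated by pw a1 b1 and pw a2 b2 (with a1, a2 > -1,
   b1, b2 < -1 and a1 + a2 + 1 < 0) is dominated by pw (a1 + a2 + 1) (max b1 b2).  Iterating,
   f conv ... conv f (m copies) is dominated by pw (m * (z1 + 1) - 1) z2 as long as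
   m * (z1 + 1) < 1, which the hypothesis on z1 guarantees for m <= 2 r; one more convolution
   with g gives domination by pw (2 r z1 + k1 + 2 r) (max k2 z2).  Finally, on the window
   [|eta|, |eta| / beta] powers of zeta differ from those of |eta| by a factor depending only on
   beta0, and the window has length (1 / beta - 1) |eta|. *)

definition pw_powr :: "real \<Rightarrow> real \<Rightarrow> real \<Rightarrow> real" where
  "pw_powr a b t = (if t \<le> 1 then t powr a else t powr b)"

lemma pw_eq_pw_powr: "pw a b x = pw_powr a b \<bar>x\<bar> * exp (- \<bar>x\<bar>)"
  by (simp add: pw_def pw_powr_def)

lemma pw_powr_nonneg [simp]: "0 \<le> pw_powr a b t"
  by (simp add: pw_powr_def)

lemma pw_powr_zero [simp]: "pw_powr a b 0 = 0"
  by (simp add: pw_powr_def)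

lemma borel_measurable_pw_powr [measurable]: "(\<lambda>t. pw_powr a b t) \<in> borel_measurable borel"
  unfolding pw_powr_def by measurable

lemma pw_powr_le_powr_fst: "0 < t \<Longrightarrow> b \<le> a \<Longrightarrow> pw_powr a b t \<le> t powr a"
  by (auto simp: pw_powr_def intro: powr_mono)

lemma pw_powr_le_powr_snd: "0 < t \<Longrightarrow> b \<le> a \<Longrightarrow> pw_powr a b t \<le> t powr b"
  by (auto simp: pw_powr_def intro: powr_mono')

lemma pw_powr_antimono:
  assumes "0 < s" "s \<le> t" "a \<le> 0" "b \<le> 0"
  shows "pw_powr a b t \<le> pw_powr a b s"
proof (cases "s \<le> 1 \<and> 1 < t")
  case True
  have "t powr b \<le> t powr 0" using True assms by (intro powr_mono) auto
  also have "\<dots> = 1" using True by simp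
  also have "1 \<le> s powr a" using True assms by (metis powr_mono2' powr_one_eq_one)
  finally show ?thesis using True by (simp add: pw_powr_def)
next
  case False
  then show ?thesis using assms by (auto simp: pw_powr_def intro: powr_mono2')
qed

text \<open>The larger of u and v is at least half of the maximum of the smaller one and Y.\<close>
lemma pw_powr_mult_le_split:
  fixes u v Y :: real
  assumes "0 < u" "0 < v" "Y \<le> u + v" "a1 \<le> 0" "b1 \<le> 0" "a2 \<le> 0" "b2 \<le> 0"
  shows "pw_powr a1 b1 u * pw_powr a2 b2 v
    \<le> pw_powr a1 b1 u * pw_powr a2 b2 (max u Y / 2) + pw_powr a2 b2 v * pw_powr a1 b1 (max v Y / 2)"
proof (cases "u \<le> v")
  case True
  have "pw_powr a2 b2 v \<le> pw_powr a2 b2 (max u Y / 2)"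
    using assms True by (intro pw_powr_antimono) auto
  then have "pw_powr a1 b1 u * pw_powr a2 b2 v \<le> pw_powr a1 b1 u * pw_powr a2 b2 (max u Y / 2)"
    by (intro mult_left_mono) auto
  then show ?thesis by (smt (verit) pw_powr_nonneg mult_nonneg_nonneg)
next
  case False
  have "pw_powr a1 b1 u \<le> pw_powr a1 b1 (max v Y / 2)"
    using assms False by (intro pw_powr_antimono) auto
  then have "pw_powr a1 b1 u * pw_powr a2 b2 v \<le> pw_powr a2 b2 v * pw_powr a1 b1 (max v Y / 2)"
    by (subst mult.commute, intro mult_left_mono) auto
  then show ?thesis by (smt (verit) pw_powr_nonneg mult_nonneg_nonneg)
qed

lemma nn_integral_even_le:
  fixes g :: "real \<Rightarrow> real"
  assumes [measurable]: "g \<in> borel_measurable borel"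
  shows "(\<integral>\<^sup>+x. ennreal (g \<bar>x\<bar>) \<partial>lborel) \<le> 2 * (\<integral>\<^sup>+x. ennreal (g x) * indicator {0..} x \<partial>lborel)"
proof -
  have "(\<integral>\<^sup>+x. ennreal (g \<bar>x\<bar>) \<partial>lborel) \<le>
      (\<integral>\<^sup>+x. ennreal (g x) * indicator {0..} x + ennreal (g (0 + -1 * x)) * indicator {0..} (0 + -1 * x) \<partial>lborel)"
    by (intro nn_integral_mono) (auto simp: indicator_def)
  also have "\<dots> = (\<integral>\<^sup>+x. ennreal (g x) * indicator {0..} x \<partial>lborel) +
      (\<integral>\<^sup>+x. ennreal (g (0 + -1 * x)) * indicator {0..} (0 + -1 * x) \<partial>lborel)"
    by (intro nn_integral_add) auto
  also have "(\<integral>\<^sup>+x. ennreal (g (0 + -1 * x)) * indicator {0..} (0 + -1 * x) \<partial>lborel)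
       = (\<integral>\<^sup>+x. ennreal (g x) * indicator {0..} x \<partial>lborel)"
    using nn_integral_real_affine[of "\<lambda>x. ennreal (g x) * indicator {0..} x" "-1" 0] by simp
  finally show ?thesis by (simp add: mult_2)
qed

lemma nn_integral_abs_powr_le:
  fixes p c :: real
  assumes "-1 < p" "0 \<le> c"
  shows "(\<integral>\<^sup>+x. ennreal (if \<bar>x\<bar> \<le> c then \<bar>x\<bar> powr p else 0) \<partial>lborel)
    \<le> ennreal (2 * (c powr (p + 1) / (p + 1)))"
proof -
  have "(\<integral>\<^sup>+x. ennreal (if \<bar>x\<bar> \<le> c then \<bar>x\<bar> powr p else 0) \<partial>lborel)
     \<le> 2 * (\<integral>\<^sup>+x. ennreal (if \<bar>x\<bar> \<le> c then \<bar>x\<bar> powr p else 0) * indicator {0..} x \<partial>lborel)"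
    using nn_integral_even_le[of "\<lambda>x. if \<bar>x\<bar> \<le> c then \<bar>x\<bar> powr p else 0"] by (simp cong: if_cong)
  also have "(\<integral>\<^sup>+x. ennreal (if \<bar>x\<bar> \<le> c then \<bar>x\<bar> powr p else 0) * indicator {0..} x \<partial>lborel)
     = (\<integral>\<^sup>+x. ennreal (x powr p) * indicator {0..c} x \<partial>lborel)"
    by (intro nn_integral_cong) (auto simp: indicator_def)
  also have "\<dots> = ennreal (c powr (p + 1) / (p + 1))"
    by (rule nn_integral_has_integral_lebesgue'[OF _ has_integral_powr_from_0]) (use assms in auto)
  finally show ?thesis by (metis ennreal_mult' ennreal_numeral zero_le_numeral mult.commute)
qed

lemma nn_integral_abs_powr_tail_le:
  fixes p c :: real
  assumes "p < -1" "0 < c"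
  shows "(\<integral>\<^sup>+x. ennreal (if c \<le> \<bar>x\<bar> then \<bar>x\<bar> powr p else 0) \<partial>lborel)
    \<le> ennreal (2 * (- (c powr (p + 1)) / (p + 1)))"
proof -
  have "(\<integral>\<^sup>+x. ennreal (if c \<le> \<bar>x\<bar> then \<bar>x\<bar> powr p else 0) \<partial>lborel)
     \<le> 2 * (\<integral>\<^sup>+x. ennreal (if c \<le> \<bar>x\<bar> then \<bar>x\<bar> powr p else 0) * indicator {0..} x \<partial>lborel)"
    using nn_integral_even_le[of "\<lambda>x. if c \<le> \<bar>x\<bar> then \<bar>x\<bar> powr p else 0"] by (simp cong: if_cong)
  also have "(\<integral>\<^sup>+x. ennreal (if c \<le> \<bar>x\<bar> then \<bar>x\<bar> powr p else 0) * indicator {0..} x \<partial>lborel)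
     = (\<integral>\<^sup>+x. ennreal (x powr p) * indicator {c..} x \<partial>lborel)"
    using assms by (intro nn_integral_cong) (auto simp: indicator_def)
  also have "\<dots> = ennreal (- (c powr (p + 1)) / (p + 1))"
    by (rule nn_integral_has_integral_lebesgue'[OF _ has_integral_powr_to_inf]) (use assms in auto)
  finally show ?thesis by (metis ennreal_mult' ennreal_numeral zero_le_numeral mult.commute)
qed

lemma nn_integral_lincomb_le:
  fixes f g :: "real \<Rightarrow> real"
  assumes [measurable]: "f \<in> borel_measurable borel" "g \<in> borel_measurable borel"
    and "\<And>x. 0 \<le> f x" "\<And>x. 0 \<le> g x" "0 \<le> c1" "0 \<le> c2" "0 \<le> F" "0 \<le> G"
    and F: "(\<integral>\<^sup>+x. ennreal (f x) \<partial>lborel) \<le> ennreal F"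
    and G: "(\<integral>\<^sup>+x. ennreal (g x) \<partial>lborel) \<le> ennreal G"
  shows "(\<integral>\<^sup>+x. ennreal (c1 * f x + c2 * g x) \<partial>lborel) \<le> ennreal (c1 * F + c2 * G)"
proof -
  have "(\<integral>\<^sup>+x. ennreal (c1 * f x + c2 * g x) \<partial>lborel)
      = (\<integral>\<^sup>+x. ennreal c1 * ennreal (f x) + ennreal c2 * ennreal (g x) \<partial>lborel)"
    using assms by (intro nn_integral_cong) (simp add: ennreal_plus ennreal_mult)
  also have "\<dots> = ennreal c1 * (\<integral>\<^sup>+x. ennreal (f x) \<partial>lborel) + ennreal c2 * (\<integral>\<^sup>+x. ennreal (g x) \<partial>lborel)"
    by (simp add: nn_integral_add nn_integral_cmult)
  also have "\<dots> \<le> ennreal c1 * ennreal F + ennreal c2 * ennreal G"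
    by (intro add_mono mult_left_mono F G) auto
  also have "\<dots> = ennreal (c1 * F + c2 * G)"
    using assms by (simp add: ennreal_plus ennreal_mult)
  finally show ?thesis .
qed

lemma nn_integral_pw_powr_product_le_small:
  fixes p q bp bq Y :: real
  assumes "-1 < p" "p + q + 1 < 0" "bp \<le> p" "bq \<le> q" "0 < Y"
  shows "(\<integral>\<^sup>+x. ennreal (pw_powr p bp \<bar>x\<bar> * pw_powr q bq (max \<bar>x\<bar> Y / 2)) \<partial>lborel)
    \<le> ennreal ((2 / (p + 1) + 2 / - (p + q + 1)) / 2 powr q * Y powr (p + q + 1))"
proof -
  have bound: "pw_powr p bp \<bar>x\<bar> * pw_powr q bq (max \<bar>x\<bar> Y / 2)
      \<le> Y powr q / 2 powr q * (if \<bar>x\<bar> \<le> Y then \<bar>x\<bar> powr p else 0)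
       + 1 / 2 powr q * (if Y \<le> \<bar>x\<bar> then \<bar>x\<bar> powr (p + q) else 0)" for x
  proof (cases "x = 0")
    case False
    have "pw_powr p bp \<bar>x\<bar> * pw_powr q bq (max \<bar>x\<bar> Y / 2) \<le> \<bar>x\<bar> powr p * (max \<bar>x\<bar> Y / 2) powr q"
      using False assms by (intro mult_mono pw_powr_le_powr_fst) auto
    also have "\<dots> = \<bar>x\<bar> powr p * max \<bar>x\<bar> Y powr q / 2 powr q"
      using assms by (simp add: powr_divide)
    also have "\<dots> \<le> Y powr q / 2 powr q * (if \<bar>x\<bar> \<le> Y then \<bar>x\<bar> powr p else 0)
       + 1 / 2 powr q * (if Y \<le> \<bar>x\<bar> then \<bar>x\<bar> powr (p + q) else 0)"
    proof (cases "\<bar>x\<bar> \<le> Y")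
      case True
      then show ?thesis by (intro add_increasing2) (auto simp: max_def mult_ac)
    next
      case False
      then show ?thesis by (intro add_increasing) (auto simp: max_def powr_add)
    qed
    finally show ?thesis .
  qed simp
  have "(\<integral>\<^sup>+x. ennreal (pw_powr p bp \<bar>x\<bar> * pw_powr q bq (max \<bar>x\<bar> Y / 2)) \<partial>lborel)
      \<le> ennreal (Y powr q / 2 powr q * (2 * (Y powr (p + 1) / (p + 1)))
          + 1 / 2 powr q * (2 * (- (Y powr (p + q + 1)) / (p + q + 1))))"
    using assms
    by (intro order.trans[OF nn_integral_mono[OF ennreal_leI[OF bound]]] nn_integral_lincomb_le
          nn_integral_abs_powr_le nn_integral_abs_powr_tail_le)
      (auto intro!: divide_nonneg_neg simp: add.commute[of _ 1])
  also have "Y powr q / 2 powr q * (2 * (Y powr (p + 1) / (p + 1)))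
          + 1 / 2 powr q * (2 * (- (Y powr (p + q + 1)) / (p + q + 1)))
      = (2 / (p + 1) + 2 / - (p + q + 1)) / 2 powr q * Y powr (p + q + 1)"
  proof -
    have "Y powr q * Y powr (p + 1) = Y powr (p + q + 1)"
      by (simp add: powr_add[symmetric] add_ac)
    moreover have "p + 1 \<noteq> 0" "p + q + 1 \<noteq> 0" using assms by auto
    ultimately show ?thesis by (simp add: divide_simps) (simp add: algebra_simps)
  qed
  finally show ?thesis .
qed

lemma nn_integral_pw_powr_product_le_large:
  fixes p q bp bq Y :: real
  assumes "-1 < p" "bp < -1" "bq \<le> q" "bq \<le> 0" "0 < Y"
  shows "(\<integral>\<^sup>+x. ennreal (pw_powr p bp \<bar>x\<bar> * pw_powr q bq (max \<bar>x\<bar> Y / 2)) \<partial>lborel)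
    \<le> ennreal ((2 / (p + 1) + 2 / - (bp + 1)) / 2 powr bq * Y powr bq)"
proof -
  have bound: "pw_powr p bp \<bar>x\<bar> * pw_powr q bq (max \<bar>x\<bar> Y / 2)
      \<le> (Y / 2) powr bq * (if \<bar>x\<bar> \<le> 1 then \<bar>x\<bar> powr p else 0)
       + (Y / 2) powr bq * (if 1 \<le> \<bar>x\<bar> then \<bar>x\<bar> powr bp else 0)" for x
  proof -
    have "pw_powr q bq (max \<bar>x\<bar> Y / 2) \<le> (max \<bar>x\<bar> Y / 2) powr bq"
      using assms by (intro pw_powr_le_powr_snd) auto
    also have "\<dots> \<le> (Y / 2) powr bq"
      using assms by (intro powr_mono2') auto
    finally have "pw_powr q bq (max \<bar>x\<bar> Y / 2) \<le> (Y / 2) powr bq" .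
    moreover have "pw_powr p bp \<bar>x\<bar>
        \<le> (if \<bar>x\<bar> \<le> 1 then \<bar>x\<bar> powr p else 0) + (if 1 \<le> \<bar>x\<bar> then \<bar>x\<bar> powr bp else 0)"
      by (simp add: pw_powr_def)
    ultimately have "pw_powr p bp \<bar>x\<bar> * pw_powr q bq (max \<bar>x\<bar> Y / 2)
        \<le> ((if \<bar>x\<bar> \<le> 1 then \<bar>x\<bar> powr p else 0) + (if 1 \<le> \<bar>x\<bar> then \<bar>x\<bar> powr bp else 0)) * (Y / 2) powr bq"
      by (intro mult_mono) auto
    then show ?thesis by (simp add: algebra_simps)
  qed
  have "(\<integral>\<^sup>+x. ennreal (pw_powr p bp \<bar>x\<bar> * pw_powr q bq (max \<bar>x\<bar> Y / 2)) \<partial>lborel)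
      \<le> ennreal ((Y / 2) powr bq * (2 * (1 powr (p + 1) / (p + 1)))
          + (Y / 2) powr bq * (2 * (- (1 powr (bp + 1)) / (bp + 1))))"
    using assms
    by (intro order.trans[OF nn_integral_mono[OF ennreal_leI[OF bound]]] nn_integral_lincomb_le
          nn_integral_abs_powr_le nn_integral_abs_powr_tail_le)
      (auto intro!: divide_nonneg_neg simp: add.commute[of _ 1])
  also have "(Y / 2) powr bq * (2 * (1 powr (p + 1) / (p + 1)))
          + (Y / 2) powr bq * (2 * (- (1 powr (bp + 1)) / (bp + 1)))
      = (2 / (p + 1) + 2 / - (bp + 1)) * (Y / 2) powr bq"
    using assms by (simp add: divide_simps) (simp add: algebra_simps)
  also have "\<dots> = (2 / (p + 1) + 2 / - (bp + 1)) / 2 powr bq * Y powr bq"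
    using assms by (simp add: powr_divide)
  finally show ?thesis .
qed

lemma nn_integral_pw_powr_product_le:
  fixes p q bp bq :: real
  assumes "-1 < p" "-1 < q" "p + q + 1 < 0" "bp < -1" "bq < -1"
  shows "\<exists>A\<ge>0. \<forall>Y>0. (\<integral>\<^sup>+x. ennreal (pw_powr p bp \<bar>x\<bar> * pw_powr q bq (max \<bar>x\<bar> Y / 2)) \<partial>lborel)
            \<le> ennreal (A * pw_powr (p + q + 1) (max bp bq) Y)"
proof -
  define A1 where "A1 = (2 / (p + 1) + 2 / - (p + q + 1)) / 2 powr q"
  define A2 where "A2 = (2 / (p + 1) + 2 / - (bp + 1)) / 2 powr bq"
  have "(\<integral>\<^sup>+x. ennreal (pw_powr p bp \<bar>x\<bar> * pw_powr q bq (max \<bar>x\<bar> Y / 2)) \<partial>lborel)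
      \<le> ennreal (max A1 A2 * pw_powr (p + q + 1) (max bp bq) Y)" if "0 < Y" for Y
  proof (cases "Y \<le> 1")
    case True
    have "A1 * Y powr (p + q + 1) \<le> max A1 A2 * pw_powr (p + q + 1) (max bp bq) Y"
      using True by (simp add: pw_powr_def mult_right_mono)
    then show ?thesis
      using nn_integral_pw_powr_product_le_small[of p q bp bq Y] assms \<open>0 < Y\<close>
      by (auto simp: A1_def intro: order.trans ennreal_leI)
  next
    case False
    have "0 \<le> A2" using assms by (simp add: A2_def)
    then have "A2 * Y powr bq \<le> A2 * Y powr (max bp bq)"
      using False by (intro mult_left_mono powr_mono) auto
    also have "\<dots> \<le> max A1 A2 * pw_powr (p + q + 1) (max bp bq) Y"
      using False by (simp add: pw_powr_def mult_right_mono)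
    finally show ?thesis
      using nn_integral_pw_powr_product_le_large[of p bp bq q Y] assms \<open>0 < Y\<close>
      by (auto simp: A2_def intro: order.trans ennreal_leI)
  qed
  moreover have "0 \<le> A1" using assms by (simp add: A1_def)
  ultimately show ?thesis by (intro exI[of _ "max A1 A2"]) auto
qed

text \<open>Since pw a b 0 = 0, the bound is only required away from 0.\<close>
definition pw_dominated :: "real \<Rightarrow> real \<Rightarrow> real \<Rightarrow> (real \<Rightarrow> real) \<Rightarrow> bool" where
  "pw_dominated C a b h \<longleftrightarrow>
     h \<in> borel_measurable borel \<and> (\<forall>x. 0 \<le> h x) \<and> (\<forall>x. x \<noteq> 0 \<longrightarrow> h x \<le> C * pw a b x)"

lemma pw_dominated_const_nonneg:
  assumes "pw_dominated C a b h"
  shows "0 \<le> C"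
proof -
  have "0 \<le> C * exp (-1)"
    using assms order.trans[of 0 "h 1"] by (auto simp: pw_dominated_def pw_def)
  then show ?thesis by (simp add: zero_le_mult_iff)
qed

lemma pw_dominated_pw: "pw_dominated 1 a b (pw a b)"
  by (auto simp: pw_dominated_def pw_def[abs_def])

lemma borel_measurable_conv [measurable]:
  assumes [measurable]: "h1 \<in> borel_measurable borel" "h2 \<in> borel_measurable borel"
  shows "conv h1 h2 \<in> borel_measurable borel"
proof -
  have "(\<lambda>y. LINT x|lborel. h1 x * h2 (y - x)) \<in> borel_measurable borel"
    by (rule lborel.borel_measurable_lebesgue_integral) measurable
  then show ?thesis unfolding conv_def[abs_def] .
qed

lemma conv_integrand_le:
  assumes h1: "pw_dominated C1 a1 b1 h1" and h2: "pw_dominated C2 a2 b2 h2"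
    and "a1 \<le> 0" "b1 \<le> 0" "a2 \<le> 0" "b2 \<le> 0" "x \<noteq> 0" "x \<noteq> y"
  shows "h1 x * h2 (y - x) \<le> C1 * C2 * exp (- \<bar>y\<bar>) *
    (pw_powr a1 b1 \<bar>x\<bar> * pw_powr a2 b2 (max \<bar>x\<bar> \<bar>y\<bar> / 2)
     + pw_powr a2 b2 \<bar>y - x\<bar> * pw_powr a1 b1 (max \<bar>y - x\<bar> \<bar>y\<bar> / 2))"
proof -
  have C: "0 \<le> C1" "0 \<le> C2" using h1 h2 by (simp_all add: pw_dominated_const_nonneg)
  have tri: "\<bar>y\<bar> \<le> \<bar>x\<bar> + \<bar>y - x\<bar>" by linarith
  have "h1 x * h2 (y - x) \<le> (C1 * pw a1 b1 x) * (C2 * pw a2 b2 (y - x))"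
    using assms C by (intro mult_mono) (auto simp: pw_dominated_def pw_def)
  also have "\<dots> = C1 * C2 * (pw_powr a1 b1 \<bar>x\<bar> * pw_powr a2 b2 \<bar>y - x\<bar>) * exp (- (\<bar>x\<bar> + \<bar>y - x\<bar>))"
    by (simp add: pw_eq_pw_powr exp_add[symmetric] exp_minus field_simps)
  also have "\<dots> \<le> C1 * C2 * (pw_powr a1 b1 \<bar>x\<bar> * pw_powr a2 b2 (max \<bar>x\<bar> \<bar>y\<bar> / 2)
     + pw_powr a2 b2 \<bar>y - x\<bar> * pw_powr a1 b1 (max \<bar>y - x\<bar> \<bar>y\<bar> / 2)) * exp (- \<bar>y\<bar>)"
    using C tri assms
    by (intro mult_mono mult_left_mono pw_powr_mult_le_split) (auto intro: add_nonneg_nonneg)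
  finally show ?thesis by (simp add: mult_ac)
qed

lemma pw_dominated_conv:
  assumes "-1 < a1" "-1 < a2" "b1 < -1" "b2 < -1" "a1 + a2 + 1 < 0"
    and h1: "pw_dominated C1 a1 b1 h1" and h2: "pw_dominated C2 a2 b2 h2"
  shows "\<exists>C. pw_dominated C (a1 + a2 + 1) (max b1 b2) (conv h1 h2)"
proof -
  have [measurable]: "h1 \<in> borel_measurable borel" "h2 \<in> borel_measurable borel"
    and nonneg: "\<And>x. 0 \<le> h1 x" "\<And>x. 0 \<le> h2 x" using h1 h2 by (auto simp: pw_dominated_def)
  have C: "0 \<le> C1" "0 \<le> C2" using h1 h2 by (simp_all add: pw_dominated_const_nonneg)
  obtain A12 where A12: "A12 \<ge> 0" "\<And>Y. Y > 0 \<Longrightarrow>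
      (\<integral>\<^sup>+x. ennreal (pw_powr a1 b1 \<bar>x\<bar> * pw_powr a2 b2 (max \<bar>x\<bar> Y / 2)) \<partial>lborel)
        \<le> ennreal (A12 * pw_powr (a1 + a2 + 1) (max b1 b2) Y)"
    using nn_integral_pw_powr_product_le[of a1 a2 b1 b2] assms by blast
  obtain A21 where A21: "A21 \<ge> 0" "\<And>Y. Y > 0 \<Longrightarrow>
      (\<integral>\<^sup>+x. ennreal (pw_powr a2 b2 \<bar>x\<bar> * pw_powr a1 b1 (max \<bar>x\<bar> Y / 2)) \<partial>lborel)
        \<le> ennreal (A21 * pw_powr (a1 + a2 + 1) (max b1 b2) Y)"
    using nn_integral_pw_powr_product_le[of a2 a1 b2 b1] assms by (auto simp: add_ac max.commute)
  have "conv h1 h2 y \<le> C1 * C2 * (A12 + A21) * pw (a1 + a2 + 1) (max b1 b2) y" if "y \<noteq> 0" for y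
  proof -
    define K where "K = C1 * C2 * exp (- \<bar>y\<bar>)"
    define Q where "Q = pw_powr (a1 + a2 + 1) (max b1 b2) \<bar>y\<bar>"
    define G12 where "G12 x = pw_powr a1 b1 \<bar>x\<bar> * pw_powr a2 b2 (max \<bar>x\<bar> \<bar>y\<bar> / 2)" for x
    define G21 where "G21 x = pw_powr a2 b2 \<bar>y - x\<bar> * pw_powr a1 b1 (max \<bar>y - x\<bar> \<bar>y\<bar> / 2)" for x
    have "(\<integral>\<^sup>+x. ennreal (G21 x) \<partial>lborel)
        = (\<integral>\<^sup>+x. ennreal (pw_powr a2 b2 \<bar>x\<bar> * pw_powr a1 b1 (max \<bar>x\<bar> \<bar>y\<bar> / 2)) \<partial>lborel)"
      using nn_integral_real_affine[of "\<lambda>x. ennreal (G21 (y - x))" "-1" y] by (simp add: G21_def)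
    then have "(\<integral>\<^sup>+x. ennreal (K * G12 x + K * G21 x) \<partial>lborel) \<le> ennreal (K * (A12 * Q) + K * (A21 * Q))"
      using A12 A21 C \<open>y \<noteq> 0\<close>
      by (intro nn_integral_lincomb_le) (auto simp: G12_def G21_def Q_def K_def)
    moreover have "(\<integral>\<^sup>+x. ennreal (h1 x * h2 (y - x)) \<partial>lborel)
        \<le> (\<integral>\<^sup>+x. ennreal (K * G12 x + K * G21 x) \<partial>lborel)"
    proof (rule nn_integral_mono_AE)
      have pt: "h1 x * h2 (y - x) \<le> K * G12 x + K * G21 x" if "x \<noteq> 0" "x \<noteq> y" for x
        using conv_integrand_le[OF h1 h2 _ _ _ _ that] assms
        unfolding K_def G12_def G21_def by (simp only: distrib_left)
      show "AE x in lborel. ennreal (h1 x * h2 (y - x)) \<le> ennreal (K * G12 x + K * G21 x)"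
        using AE_lborel_singleton[of 0] AE_lborel_singleton[of y] by eventually_elim (simp add: ennreal_leI pt)
    qed
    ultimately have "(\<integral>\<^sup>+x. ennreal (h1 x * h2 (y - x)) \<partial>lborel) \<le> ennreal (K * (A12 * Q) + K * (A21 * Q))"
      by (rule order.trans[rotated])
    moreover have "conv h1 h2 y = enn2real (\<integral>\<^sup>+x. ennreal (h1 x * h2 (y - x)) \<partial>lborel)"
      unfolding conv_def using nonneg by (intro integral_eq_nn_integral) (auto intro: mult_nonneg_nonneg)
    ultimately have "conv h1 h2 y \<le> K * (A12 * Q) + K * (A21 * Q)"
      using A12 A21 C by (auto intro!: enn2real_leI simp del: ennreal_plus simp: K_def Q_def)
    then show ?thesis by (simp add: K_def Q_def pw_eq_pw_powr algebra_simps)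
  qed
  moreover have "0 \<le> conv h1 h2 y" for y
    unfolding conv_def using nonneg by (intro Bochner_Integration.integral_nonneg mult_nonneg_nonneg)
  moreover have "conv h1 h2 \<in> borel_measurable borel" by measurable
  ultimately show ?thesis unfolding pw_dominated_def by blast
qed

lemma conv_pow_Suc: "1 \<le> m \<Longrightarrow> conv_pow f (Suc m) = conv f (conv_pow f m)"
  by (cases m) auto

lemma pw_dominated_conv_pow:
  assumes f: "pw_dominated C a b f" and "-1 < a" "b < -1"
  shows "1 \<le> m \<Longrightarrow> real m * (a + 1) < 1 \<Longrightarrow> \<exists>C. pw_dominated C (real m * (a + 1) - 1) b (conv_pow f m)"
proof (induction m rule: nat_induct_at_least)
  case base
  show ?case using f by auto
next
  case (Suc m)
  have "real m * (a + 1) \<le> real (Suc m) * (a + 1)" using assms by (intro mult_right_mono) auto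
  then obtain C' where C': "pw_dominated C' (real m * (a + 1) - 1) b (conv_pow f m)"
    using Suc by auto
  have "-1 < real m * (a + 1) - 1" using Suc.hyps assms by simp
  moreover have "a + (real m * (a + 1) - 1) + 1 < 0" using Suc.prems by (simp add: algebra_simps)
  ultimately obtain C'' where "pw_dominated C'' (a + (real m * (a + 1) - 1) + 1) (max b b) (conv f (conv_pow f m))"
    using pw_dominated_conv[OF assms(2) _ assms(3,3) _ f C'] by blast
  moreover have "a + (real m * (a + 1) - 1) + 1 = real (Suc m) * (a + 1) - 1"
    by (simp add: algebra_simps)
  ultimately show ?case using Suc.hyps by (auto simp: conv_pow_Suc)
qed

lemma powr_le_on_window:
  fixes t z e \<beta>0 \<beta> :: real
  assumes "0 < t" "t \<le> z" "z \<le> t / \<beta>" "0 < \<beta>0" "\<beta>0 \<le> \<beta>" "\<beta> \<le> 1"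
  shows "z powr e \<le> (1 / \<beta>0) powr \<bar>e\<bar> * t powr e"
proof (cases "0 \<le> e")
  case True
  have "z powr e \<le> (t / \<beta>) powr e" using assms True by (intro powr_mono2) auto
  also have "\<dots> = (1 / \<beta>) powr e * t powr e" by (simp add: powr_divide field_simps)
  also have "\<dots> \<le> (1 / \<beta>0) powr e * t powr e"
    using assms True by (intro mult_right_mono powr_mono2) (auto simp: field_simps)
  finally show ?thesis using True by simp
next
  case False
  have "z powr e \<le> t powr e" using assms False by (intro powr_mono2') auto
  moreover have "1 \<le> (1 / \<beta>0) powr \<bar>e\<bar>" using assms by (intro ge_one_powr_ge_zero) auto
  ultimately show ?thesis by (metis mult_right_mono mult_1 powr_ge_zero order.trans)
qed

lemma pw_div_powr_le_on_window:
  fixes a b l t z \<beta>0 \<beta> :: real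
  assumes "b \<le> a" "0 < t" "t \<le> z" "z \<le> t / \<beta>" "0 < \<beta>0" "\<beta>0 \<le> \<beta>" "\<beta> \<le> 1"
  shows "pw a b z / z powr l
    \<le> (1 / \<beta>0) powr (\<bar>a - l\<bar> + \<bar>b - l\<bar>) * t powr (if t \<le> 1 then a - l else b - l) * exp (- t)"
proof -
  define e where "e = (if t \<le> 1 then a - l else b - l)"
  have z: "0 < z" using assms by linarith
  have "pw_powr a b z / z powr l \<le> z powr e"
  proof (cases "t \<le> 1")
    case True
    have "pw_powr a b z / z powr l \<le> z powr a / z powr l"
      using pw_powr_le_powr_fst[OF z assms(1)] by (intro divide_right_mono) auto
    then show ?thesis using True by (simp add: e_def powr_diff)
  next
    case False
    then show ?thesis using assms by (simp add: e_def pw_powr_def powr_diff)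
  qed
  also have "\<dots> \<le> (1 / \<beta>0) powr \<bar>e\<bar> * t powr e"
    using assms by (intro powr_le_on_window) auto
  also have "\<dots> \<le> (1 / \<beta>0) powr (\<bar>a - l\<bar> + \<bar>b - l\<bar>) * t powr e"
    using assms by (intro mult_right_mono powr_mono) (auto simp: e_def field_simps)
  finally have "pw_powr a b z / z powr l * exp (- z) \<le> (1 / \<beta>0) powr (\<bar>a - l\<bar> + \<bar>b - l\<bar>) * t powr e * exp (- t)"
    using assms by (intro mult_mono) auto
  then show ?thesis using z by (simp add: pw_eq_pw_powr e_def)
qed

lemma set_integral_Icc_le_const:
  fixes f :: "real \<Rightarrow> real"
  assumes "s \<le> u" "0 \<le> D" "\<And>z. z \<in> {s..u} \<Longrightarrow> f z \<le> D"
  shows "(LINT z:{s..u}|lborel. f z) \<le> D * (u - s)"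
proof -
  have "integrable lborel (\<lambda>z. indicator {s..u} z *\<^sub>R D)"
    using assms by (intro integrable_indicator) auto
  then have "(LINT z:{s..u}|lborel. f z) \<le> (LINT z:{s..u}|lborel. D)"
    unfolding set_lebesgue_integral_def using assms
    by (intro integral_mono') (auto split: split_indicator)
  also have "\<dots> = D * (u - s)"
    using assms by (subst set_integral_const) auto
  finally show ?thesis .
qed

lemma window_integral_le:
  fixes C a b l \<beta>0 :: real and h :: "real \<Rightarrow> real"
  assumes h: "pw_dominated C a b h" and "b \<le> a" "0 < \<beta>0"
  shows "\<exists>K. \<forall>\<beta> \<eta>. \<beta>0 < \<beta> \<and> \<beta> < 1 \<and> \<eta> \<noteq> 0 \<longrightarrow>
    (LINT \<zeta>:{\<bar>\<eta>\<bar>..\<bar>\<eta>\<bar>/\<beta>}|lborel. h \<zeta> / \<bar>\<zeta>\<bar> powr l)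
    \<le> (1 - \<beta>) * K * \<bar>\<eta>\<bar> powr (if \<bar>\<eta>\<bar> \<le> 1 then a - l + 1 else b + 1 - l) * exp (- \<bar>\<eta>\<bar>)"
proof (intro exI allI impI, elim conjE)
  fix \<beta> \<eta> :: real assume \<beta>: "\<beta>0 < \<beta>" "\<beta> < 1" and "\<eta> \<noteq> 0"
  define t where "t = \<bar>\<eta>\<bar>"
  define M where "M = (1 / \<beta>0) powr (\<bar>a - l\<bar> + \<bar>b - l\<bar>)"
  define e where "e = (if t \<le> 1 then a - l else b - l)"
  have t: "0 < t" using \<open>\<eta> \<noteq> 0\<close> by (simp add: t_def)
  have C: "0 \<le> C" using h by (rule pw_dominated_const_nonneg)
  have "h z / \<bar>z\<bar> powr l \<le> C * M * t powr e * exp (- t)" if z: "z \<in> {t..t / \<beta>}" for z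
  proof -
    have "h z / \<bar>z\<bar> powr l \<le> C * (pw a b z / z powr l)"
      using h z t by (auto simp: pw_dominated_def intro!: divide_right_mono)
    also have "\<dots> \<le> C * (M * t powr e * exp (- t))"
    proof (rule mult_left_mono[OF _ C])
      show "pw a b z / z powr l \<le> M * t powr e * exp (- t)"
        unfolding M_def e_def using z t assms \<beta> by (intro pw_div_powr_le_on_window) auto
    qed
    finally show ?thesis by (simp add: mult_ac)
  qed
  then have "(LINT \<zeta>:{t..t / \<beta>}|lborel. h \<zeta> / \<bar>\<zeta>\<bar> powr l) \<le> C * M * t powr e * exp (- t) * (t / \<beta> - t)"
    using C t \<beta> assms by (intro set_integral_Icc_le_const) (auto simp: M_def field_simps)
  also have "\<dots> = (1 - \<beta>) * (C * M / \<beta>) * (t powr e * t) * exp (- t)"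
    using \<beta> assms by (simp add: field_simps)
  also have "\<dots> \<le> (1 - \<beta>) * (C * M / \<beta>0) * (t powr e * t) * exp (- t)"
    using C t \<beta> assms by (intro mult_right_mono mult_left_mono divide_left_mono) (auto simp: M_def)
  also have "t powr e * t = t powr (if t \<le> 1 then a - l + 1 else b + 1 - l)"
  proof -
    have "(if t \<le> 1 then a - l + 1 else b + 1 - l) = e + 1" by (simp add: e_def)
    then show ?thesis using t by (simp add: powr_add)
  qed
  finally show "(LINT \<zeta>:{\<bar>\<eta>\<bar>..\<bar>\<eta>\<bar>/\<beta>}|lborel. h \<zeta> / \<bar>\<zeta>\<bar> powr l)
    \<le> (1 - \<beta>) * (C * M / \<beta>0) * \<bar>\<eta>\<bar> powr (if \<bar>\<eta>\<bar> \<le> 1 then a - l + 1 else b + 1 - l) * exp (- \<bar>\<eta>\<bar>)"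
    unfolding t_def .
qed

theorem lemma4p2:
  fixes \<beta>0 l k1 k2 z1 z2 :: real and r :: nat
  assumes "0 < \<beta>0" "\<beta>0 < 1" "l > 0" "r \<ge> 1"
    and "k1 > -1" "k2 < -1" "z1 > -1" "z2 < -1"
    and "z1 < - (2 * real r - 1) / (2 * real r)"
    and "2 * real r * z1 + k1 + 2 * real r < 0"
  shows "\<exists>K. \<forall>\<beta> \<eta>. \<beta>0 < \<beta> \<and> \<beta> < 1 \<and> \<eta> \<noteq> 0 \<longrightarrow>
    (LINT \<zeta>:{\<bar>\<eta>\<bar>..\<bar>\<eta>\<bar>/\<beta>}|lborel.
        conv (pw k1 k2) (conv_pow (pw z1 z2) (2 * r)) \<zeta> / \<bar>\<zeta>\<bar> powr l)
    \<le> (1 - \<beta>) * K * \<bar>\<eta>\<bar> powr (if \<bar>\<eta>\<bar> \<le> 1 then 2 * real r * z1 + k1 + 2 * real r - l + 1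
                                   else max k2 z2 + 1 - l) * exp (- \<bar>\<eta>\<bar>)"
proof -
  have "real (2 * r) * (z1 + 1) < 1"
    using assms(4,9) by (simp add: field_simps)
  then have "\<exists>C. pw_dominated C (real (2 * r) * (z1 + 1) - 1) z2 (conv_pow (pw z1 z2) (2 * r))"
    using assms(4) by (intro pw_dominated_conv_pow[OF pw_dominated_pw assms(7,8)]) auto
  then obtain CF where CF: "pw_dominated CF (real (2 * r) * (z1 + 1) - 1) z2 (conv_pow (pw z1 z2) (2 * r))"
    by blast
  have pos: "0 < real (2 * r) * (z1 + 1)" using assms(4,7) by simp
  have exponent: "k1 + (real (2 * r) * (z1 + 1) - 1) + 1 = 2 * real r * z1 + k1 + 2 * real r"
    by (simp add: algebra_simps)
  have "\<exists>C. pw_dominated C (k1 + (real (2 * r) * (z1 + 1) - 1) + 1) (max k2 z2)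
      (conv (pw k1 k2) (conv_pow (pw z1 z2) (2 * r)))"
    using pos assms(10) exponent by (intro pw_dominated_conv[OF assms(5) _ assms(6,8) _ pw_dominated_pw CF]) auto
  then obtain CH where CH: "pw_dominated CH (2 * real r * z1 + k1 + 2 * real r) (max k2 z2)
      (conv (pw k1 k2) (conv_pow (pw z1 z2) (2 * r)))"
    unfolding exponent by blast
  have "max k2 z2 \<le> 2 * real r * z1 + k1 + 2 * real r"
    using pos exponent assms(5,6,8) by (simp only: max.bounded_iff) linarith
  then show ?thesis using window_integral_le[OF CH _ assms(1)] by blast
qed

end
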